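(* Let $d\ge 2$. If the graph of a stacked $(d+1)$-polytope is $d$-ball packable, then its $d$-ball packing $\mathcal S$ is stress-free: the only function $T$ on the edges of the tangency graph $G(\mathcal S)$ satisfying $\sum_{j:\,S_iS_j\in E(G(\mathcal S))}T(S_iS_j)(\mathbf v_j-\mathbf v_i)=0$ for every ball $S_i\in\mathcal S$ is $T\equiv 0$.
   Context: A stacked polytope is one obtained from a simplex by repeatedly gluing a new simplex onto a facet. A $d$-ball in $\hat{\mathbb R}^d$ is a closed ball, closed exterior of an open ball with $\infty$, or a closed half-space with $\infty$; a $d$-ball packing is a collection of $d$-balls with disjoint interiors; its tangency graph joins balls meeting in exactly one point; a graph is $d$-ball packable if isomorphic to the tangency graph of some $d$-ball packing. The vectors $\mathbf v_i$ are defined as follows: map the packing by stereographic projection (after a Möbius transformation if necessary) to a packing of spherical caps on $\mathbb S^d\subset\mathbb R^{d+1}$, each of spherical radius $\theta_i<\pi/2$ with center $\mathbf c_i$; then $\mathbf v_i=\mathbf c_i/\cos\theta_i$ is the polar vertex of the cap corresponding to $S_i$ (the point with $\partial C_i=\mathbb S^d\cap\{x:\langle x,\mathbf v_i\rangle=1\}$). *)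

theory Defs
  imports "HOL-Analysis.Analysis"
begin

text \<open>A stacked (d+1)-polytope is described by its vertex set V, its edge set E
  (a set of 2-element sets) and its set of facets F (each a (d+1)-set of vertices).
  Start: a (d+1)-simplex on d+2 vertices.  Step: glue a new (d+1)-simplex onto a
  facet f, i.e. add a new vertex v adjacent to all vertices of f; the facet f is
  replaced by the facets (f - {u}) + v for u in f.\<close>

inductive stacked_polytope :: "nat \<Rightarrow> 'v set \<Rightarrow> 'v set set \<Rightarrow> 'v set set \<Rightarrow> bool"
  for d :: nat where
  simplex: "finite S \<Longrightarrow> card S = d + 2 \<Longrightarrow>
     stacked_polytope d S {{a, b} | a b. a \<in> S \<and> b \<in> S \<and> a \<noteq> b} {S - {a} | a. a \<in> S}"
| stack: "stacked_polytope d V E F \<Longrightarrow> f \<in> F \<Longrightarrow> v \<notin> V \<Longrightarrow>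
     stacked_polytope d (insert v V) (E \<union> {{v, u} | u. u \<in> f})
        ((F - {f}) \<union> {insert v (f - {u}) | u. u \<in> f})"

definition stacked_polytope_graph :: "nat \<Rightarrow> 'v set \<Rightarrow> 'v set set \<Rightarrow> bool" where
  "stacked_polytope_graph d V E \<longleftrightarrow> (\<exists>F. stacked_polytope d V E F)"

text \<open>Unit sphere S^d in R^{d+1} (here R^{d+1} = real^'n with CARD('n) = d+1).\<close>
definition unit_sphere :: "(real^'n) set" where
  "unit_sphere = {x. norm x = 1}"

definition cap :: "real^'n \<Rightarrow> real \<Rightarrow> (real^'n) set" where
  "cap c th = {x \<in> unit_sphere. x \<bullet> c \<ge> cos th}"

definition cap_interior :: "real^'n \<Rightarrow> real \<Rightarrow> (real^'n) set" where
  "cap_interior c th = {x \<in> unit_sphere. x \<bullet> c > cos th}"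

definition cap_packing :: "'v set \<Rightarrow> ('v \<Rightarrow> real^'n) \<Rightarrow> ('v \<Rightarrow> real) \<Rightarrow> bool" where
  "cap_packing V c th \<longleftrightarrow>
     (\<forall>i\<in>V. norm (c i) = 1 \<and> 0 < th i \<and> th i < pi / 2) \<and>
     (\<forall>i\<in>V. \<forall>j\<in>V. i \<noteq> j \<longrightarrow> cap_interior (c i) (th i) \<inter> cap_interior (c j) (th j) = {})"

definition caps_tangent :: "real^'n \<Rightarrow> real \<Rightarrow> real^'n \<Rightarrow> real \<Rightarrow> bool" where
  "caps_tangent c1 t1 c2 t2 \<longleftrightarrow> (\<exists>!x. x \<in> cap c1 t1 \<inter> cap c2 t2)"

definition tangency_graph_is :: "'v set \<Rightarrow> ('v \<Rightarrow> real^'n) \<Rightarrow> ('v \<Rightarrow> real) \<Rightarrow> 'v set set \<Rightarrow> bool" where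
  "tangency_graph_is V c th E \<longleftrightarrow>
     E \<subseteq> {{i, j} | i j. i \<in> V \<and> j \<in> V \<and> i \<noteq> j} \<and>
     (\<forall>i\<in>V. \<forall>j\<in>V. i \<noteq> j \<longrightarrow> ({i, j} \<in> E \<longleftrightarrow> caps_tangent (c i) (th i) (c j) (th j)))"

definition polar_vertex :: "real^'n \<Rightarrow> real \<Rightarrow> real^'n" where
  "polar_vertex c th = (1 / cos th) *\<^sub>R c"

definition stress_free :: "'v set \<Rightarrow> 'v set set \<Rightarrow> ('v \<Rightarrow> real^'n) \<Rightarrow> bool" where
  "stress_free V E v \<longleftrightarrow>
     (\<forall>T :: 'v set \<Rightarrow> real.
        (\<forall>i\<in>V. (\<Sum>j\<in>{j\<in>V. {i, j} \<in> E}. T {i, j} *\<^sub>R (v j - v i)) = 0)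
        \<longrightarrow> (\<forall>e\<in>E. T e = 0))"

end

theory Submission
  imports Defs
begin

(*
  With t_i = tan th_i, the polar vertices v_i = c_i / cos th_i of a cap packing satisfy
  <v_i, v_i> = 1 + t_i^2, and <v_i, v_j> = 1 - t_i t_j whenever the caps i and j are tangent,
  because then <c_i, c_j> = cos (th_i + th_j).  On a clique of the tangency graph with other
  than two vertices this Gram structure makes the v_i affinely independent: pairing an affine
  dependence with v_j gives lam_j t_j = S / 2 for S = sum lam_i t_i, and summing over the clique
  forces S = 0.  A stacked polytope arises by attaching a new vertex v to a facet f, which spans
  a clique of d + 1 vertices; so the vectors v_u - v_v (u in f) are linearly independent, the
  equilibrium at v kills the stress on the new edges, and induction on the stacking does the rest.
*)

lemma norm_reject_le_sin:
  fixes a x :: "'a::real_inner"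
  assumes a: "norm a = 1" and x: "norm x = 1" and xa: "cos al \<le> x \<bullet> a"
    and al: "0 \<le> al" "al \<le> pi / 2"
  shows "norm (a - (x \<bullet> a) *\<^sub>R x) \<le> sin al"
proof -
  have "0 \<le> cos al" using al by (intro cos_ge_zero) auto
  have "(norm (a - (x \<bullet> a) *\<^sub>R x))\<^sup>2 = (a - (x \<bullet> a) *\<^sub>R x) \<bullet> (a - (x \<bullet> a) *\<^sub>R x)"
    by (rule power2_norm_eq_inner)
  also have "\<dots> = 1 - (x \<bullet> a)\<^sup>2"
    using a x by (simp add: norm_eq_1 inner_diff_left inner_diff_right inner_commute power2_eq_square)
  also have "\<dots> \<le> 1 - (cos al)\<^sup>2"
    using power_mono[OF xa \<open>0 \<le> cos al\<close>, of 2] by simp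
  also have "\<dots> = (sin al)\<^sup>2" by (simp add: sin_squared_eq)
  finally show ?thesis
    by (rule power2_le_imp_le) (use al in \<open>auto intro: sin_ge_zero\<close>)
qed

lemma cos_add_le_inner_if_caps_meet:
  fixes a b x :: "'a::real_inner"
  assumes a: "norm a = 1" and b: "norm b = 1" and x: "norm x = 1"
    and xa: "cos al \<le> x \<bullet> a" and xb: "cos be \<le> x \<bullet> b"
    and al: "0 \<le> al" "al \<le> pi / 2" and be: "0 \<le> be" "be \<le> pi / 2"
  shows "cos (al + be) \<le> a \<bullet> b"
proof -
  define u where "u = a - (x \<bullet> a) *\<^sub>R x"
  define w where "w = b - (x \<bullet> b) *\<^sub>R x"
  have "a \<bullet> b = (x \<bullet> a) * (x \<bullet> b) + u \<bullet> w"
    using x unfolding u_def w_def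
    by (simp add: inner_diff_left inner_diff_right inner_commute norm_eq_1)
  moreover have "cos al * cos be \<le> (x \<bullet> a) * (x \<bullet> b)"
    using xa xb al be cos_ge_zero[of al] cos_ge_zero[of be] by (intro mult_mono) auto
  moreover have "norm u * norm w \<le> sin al * sin be"
    using norm_reject_le_sin[OF a x xa al] norm_reject_le_sin[OF b x xb be] al sin_ge_zero
    unfolding u_def w_def by (intro mult_mono) auto
  moreover have "- (norm u * norm w) \<le> u \<bullet> w"
    using Cauchy_Schwarz_ineq2[of u w] by (simp add: abs_le_iff)
  ultimately show ?thesis by (simp add: cos_add)
qed

lemma sphere_point_at_angles:
  fixes a b :: "'a::real_inner"
  assumes a: "norm a = 1" and b: "norm b = 1" and ab: "a \<bullet> b = cos g" and g: "0 < g" "g < pi"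
  obtains x where "norm x = 1" "x \<bullet> a = cos p" "x \<bullet> b = cos (g - p)"
proof
  have "sin g > 0" using g by (rule sin_gt_zero)
  define e where "e = (1 / sin g) *\<^sub>R (b - cos g *\<^sub>R a)"
  define x where "x = cos p *\<^sub>R a + sin p *\<^sub>R e"
  have aa: "a \<bullet> a = 1" and bb: "b \<bullet> b = 1" using a b by (simp_all add: norm_eq_1)
  have ae: "a \<bullet> e = 0" and eb: "e \<bullet> b = sin g" and ee: "e \<bullet> e = 1"
    using aa bb ab \<open>sin g > 0\<close> sin_squared_eq[of g]
    unfolding e_def by (auto simp: inner_diff_left inner_diff_right inner_commute field_simps
        power2_eq_square)
  show "x \<bullet> a = cos p"
    using aa ae unfolding x_def by (simp add: inner_add_left inner_commute[of e a])
  show "x \<bullet> b = cos (g - p)"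
    using ab eb unfolding x_def by (simp add: inner_add_left cos_diff)
  have "x \<bullet> x = 1"
    using aa ae ee unfolding x_def
    by (simp add: inner_add_left inner_add_right inner_commute flip: power2_eq_square)
  then show "norm x = 1" by (simp add: norm_eq_1)
qed

lemma inner_le_cos_add_if_caps_disjoint:
  fixes a b :: "'a::real_inner"
  assumes a: "norm a = 1" and b: "norm b = 1"
    and al: "0 < al" "al < pi / 2" and be: "0 < be" "be < pi / 2"
    and disjoint: "\<And>x. norm x = 1 \<Longrightarrow> cos al < x \<bullet> a \<Longrightarrow> cos be < x \<bullet> b \<Longrightarrow> False"
  shows "a \<bullet> b \<le> cos (al + be)"
proof (rule ccontr)
  assume "\<not> ?thesis"
  hence gt: "cos (al + be) < a \<bullet> b" by simp
  have "\<bar>a \<bullet> b\<bar> \<le> 1" using Cauchy_Schwarz_ineq2[of a b] a b by simp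
  define g where "g = arccos (a \<bullet> b)"
  have cos_g: "cos g = a \<bullet> b" and g: "0 \<le> g" "g \<le> pi"
    using \<open>\<bar>a \<bullet> b\<bar> \<le> 1\<close> unfolding g_def by (auto intro: arccos_lbound arccos_ubound)
  have "g < al + be"
    using gt cos_g g al be cos_mono_less_eq[of "al + be" g] by auto
  show False
  proof (cases "g = 0")
    case True
    then have "a \<bullet> b = 1" using cos_g by simp
    moreover have "cos al < 1" "cos be < 1"
      using al be cos_monotone_0_pi[of 0 al] cos_monotone_0_pi[of 0 be] by auto
    ultimately show False using disjoint[OF a] a by (simp add: norm_eq_1)
  next
    case False
    \<comment> \<open>Split the angle g between the two caps in the ratio al : be.\<close>
    define p where "p = g * al / (al + be)"
    have "al * g < al * (al + be)" "be * g < be * (al + be)"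
      using \<open>g < al + be\<close> al be by simp_all
    then have p: "0 \<le> p" "p < al" and q: "0 \<le> g - p" "g - p < be"
      using g al be unfolding p_def by (auto simp: field_simps)
    have "g < pi" using \<open>g < al + be\<close> al be by simp
    with g False obtain x where x: "norm x = 1" "x \<bullet> a = cos p" "x \<bullet> b = cos (g - p)"
      using sphere_point_at_angles[OF a b cos_g[symmetric]] by auto
    have "cos al < cos p" "cos be < cos (g - p)"
      using p q al be by (auto intro!: cos_mono_less_eq[THEN iffD2])
    with x show False using disjoint[OF x(1)] by simp
  qed
qed

lemma polar_vertex_inner_self:
  assumes "norm c = 1" "cos th \<noteq> 0"
  shows "polar_vertex c th \<bullet> polar_vertex c th = 1 + (tan th)\<^sup>2"
  using assms sin_cos_squared_add[of th]
  by (simp add: polar_vertex_def tan_def norm_eq_1 field_simps power2_eq_square)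

lemma polar_vertex_inner_tangent:
  assumes "c1 \<bullet> c2 = cos (a + b)" "cos a \<noteq> 0" "cos b \<noteq> 0"
  shows "polar_vertex c1 a \<bullet> polar_vertex c2 b = 1 - tan a * tan b"
  using assms by (simp add: polar_vertex_def cos_add tan_def field_simps)

definition polar_gram :: "'v set \<Rightarrow> 'v set set \<Rightarrow> ('v \<Rightarrow> real) \<Rightarrow> ('v \<Rightarrow> 'a::real_inner) \<Rightarrow> bool" where
  "polar_gram V E t P \<longleftrightarrow>
     (\<forall>i\<in>V. 0 < t i \<and> P i \<bullet> P i = 1 + (t i)\<^sup>2) \<and>
     (\<forall>i\<in>V. \<forall>j\<in>V. i \<noteq> j \<longrightarrow> {i, j} \<in> E \<longrightarrow> P i \<bullet> P j = 1 - t i * t j)"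

lemma cap_packing_tangent_inner:
  assumes packing: "cap_packing V c th" and ij: "i \<in> V" "j \<in> V" "i \<noteq> j"
    and tangent: "caps_tangent (c i) (th i) (c j) (th j)"
  shows "c i \<bullet> c j = cos (th i + th j)"
proof (rule antisym)
  have caps: "norm (c k) = 1" "0 < th k" "th k < pi / 2" if "k \<in> V" for k
    using packing that unfolding cap_packing_def by auto
  obtain x where "x \<in> cap (c i) (th i) \<inter> cap (c j) (th j)"
    using tangent unfolding caps_tangent_def by blast
  then show "cos (th i + th j) \<le> c i \<bullet> c j"
    using caps[OF ij(1)] caps[OF ij(2)]
    by (intro cos_add_le_inner_if_caps_meet[where x = x])
       (auto simp: cap_def unit_sphere_def inner_commute)
  show "c i \<bullet> c j \<le> cos (th i + th j)"
  proof (rule inner_le_cos_add_if_caps_disjoint)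
    fix y assume "norm y = 1" "cos (th i) < y \<bullet> c i" "cos (th j) < y \<bullet> c j"
    then have "y \<in> cap_interior (c i) (th i) \<inter> cap_interior (c j) (th j)"
      by (simp add: cap_interior_def unit_sphere_def)
    with packing ij show False unfolding cap_packing_def by blast
  qed (use caps[OF ij(1)] caps[OF ij(2)] in auto)
qed

lemma cap_packing_polar_gram:
  assumes packing: "cap_packing V c th" and tangency: "tangency_graph_is V c th E"
  shows "polar_gram V E (\<lambda>i. tan (th i)) (\<lambda>i. polar_vertex (c i) (th i))"
proof -
  have caps: "norm (c i) = 1" "0 < th i" "th i < pi / 2" if "i \<in> V" for i
    using packing that unfolding cap_packing_def by auto
  then have "cos (th i) \<noteq> 0" if "i \<in> V" for i
    using that cos_gt_zero_pi[of "th i"] by force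
  moreover have "c i \<bullet> c j = cos (th i + th j)" if "i \<in> V" "j \<in> V" "i \<noteq> j" "{i, j} \<in> E" for i j
    using cap_packing_tangent_inner[OF packing that(1-3)] tangency that
    unfolding tangency_graph_is_def by blast
  ultimately show ?thesis
    using caps unfolding polar_gram_def
    by (auto simp: polar_vertex_inner_self polar_vertex_inner_tangent tan_gt_zero)
qed

definition clique :: "'v set set \<Rightarrow> 'v set \<Rightarrow> bool" where
  "clique E W \<longleftrightarrow> (\<forall>a\<in>W. \<forall>b\<in>W. a \<noteq> b \<longrightarrow> {a, b} \<in> E)"

lemma polar_gram_clique_inner:
  assumes "polar_gram V E t P" "W \<subseteq> V" "clique E W" "i \<in> W" "j \<in> W"
  shows "P i \<bullet> P j = 1 - t i * t j + (if i = j then 2 * (t j)\<^sup>2 else 0)"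
  using assms unfolding polar_gram_def clique_def by (auto simp: power2_eq_square subset_iff)

lemma polar_gram_clique_affine_independent:
  fixes P :: "'v \<Rightarrow> 'a::real_inner"
  assumes gram: "polar_gram V E t P" and W: "W \<subseteq> V" "clique E W" "finite W" "card W \<noteq> 2"
    and sum_lam: "(\<Sum>i\<in>W. lam i) = 0" and sum_lam_P: "(\<Sum>i\<in>W. lam i *\<^sub>R P i) = 0"
    and i: "i \<in> W"
  shows "lam i = 0"
proof -
  have t_pos: "t j > 0" if "j \<in> W" for j
    using gram W(1) that unfolding polar_gram_def by auto
  define S where "S = (\<Sum>i\<in>W. lam i * t i)"
  have key: "lam j * t j = S / 2" if j: "j \<in> W" for j
  proof -
    have "0 = (\<Sum>i\<in>W. lam i *\<^sub>R P i) \<bullet> P j" using sum_lam_P by simp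
    also have "\<dots> = (\<Sum>i\<in>W. lam i - t j * (lam i * t i) + (if i = j then 2 * lam j * (t j)\<^sup>2 else 0))"
      unfolding inner_sum_left
      by (intro sum.cong refl) (simp add: polar_gram_clique_inner[OF gram W(1,2) _ j] algebra_simps)
    also have "\<dots> = - t j * S + 2 * lam j * (t j)\<^sup>2"
      using sum_lam j W(3) by (simp add: sum.distrib sum_subtractf sum_distrib_left sum_negf S_def)
    finally have "t j * (2 * lam j * t j - S) = 0"
      by (simp add: algebra_simps power2_eq_square) linarith
    thus ?thesis using t_pos[OF j] by simp
  qed
  have "(\<Sum>i\<in>W. lam i * t i) = (\<Sum>i\<in>W. S / 2)" using key by (intro sum.cong) auto
  hence "S * (2 - real (card W)) = 0" by (simp add: algebra_simps flip: S_def)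
  with W(4) have "S = 0" by simp
  with key[OF i] t_pos[OF i] show ?thesis by simp
qed

lemma polar_gram_clique_edge_vectors_independent:
  fixes P :: "'v \<Rightarrow> 'a::real_inner"
  assumes gram: "polar_gram V E t P" and W: "W \<subseteq> V" "clique E W" "finite W" "card W \<noteq> 2"
    and x: "x \<in> W" and eq: "(\<Sum>u\<in>W - {x}. mu u *\<^sub>R (P u - P x)) = 0"
    and u: "u \<in> W - {x}"
  shows "mu u = 0"
proof -
  define lam where "lam = (\<lambda>u. if u = x then - (\<Sum>u\<in>W - {x}. mu u) else mu u)"
  have "(\<Sum>i\<in>W. lam i) = lam x + (\<Sum>i\<in>W - {x}. lam i)"
    using W(3) x by (rule sum.remove)
  hence sum_lam: "(\<Sum>i\<in>W. lam i) = 0" by (simp add: lam_def)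
  have "(\<Sum>i\<in>W. lam i *\<^sub>R P i) = lam x *\<^sub>R P x + (\<Sum>i\<in>W - {x}. lam i *\<^sub>R P i)"
    using W(3) x by (rule sum.remove)
  also have "\<dots> = (\<Sum>u\<in>W - {x}. mu u *\<^sub>R (P u - P x))"
    by (simp add: lam_def scaleR_diff_right sum_subtractf scaleR_sum_left)
  finally have "(\<Sum>i\<in>W. lam i *\<^sub>R P i) = 0" using eq by simp
  from polar_gram_clique_affine_independent[OF gram W sum_lam this, of u] u show ?thesis
    by (simp add: lam_def)
qed

lemma stacked_polytope_finite: "stacked_polytope d V E F \<Longrightarrow> finite V"
  by (induction rule: stacked_polytope.induct) auto

lemma stacked_polytope_facet:
  assumes "stacked_polytope d V E F" "f \<in> F"
  shows "f \<subseteq> V \<and> card f = d + 1 \<and> clique E f"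
  using assms
proof (induction arbitrary: f rule: stacked_polytope.induct)
  case (simplex S)
  then obtain a where "a \<in> S" "f = S - {a}" by blast
  with simplex.hyps show ?case by (auto simp: clique_def)
next
  case (stack V E F g v)
  have g: "g \<subseteq> V" "card g = d + 1" "clique E g" using stack.IH[OF stack.hyps(2)] by auto
  show ?case
  proof (cases "f \<in> F - {g}")
    case True
    with stack.IH show ?thesis by (auto simp: clique_def)
  next
    case False
    with stack.prems obtain u where "u \<in> g" "f = insert v (g - {u})" by blast
    moreover have "finite g" "v \<notin> g" using g(1,2) stack.hyps(3) card.infinite by fastforce+
    ultimately show ?thesis using g
      by (auto simp: clique_def card_Diff_singleton subset_iff insert_commute)
  qed
qed

lemma stacked_polytope_edges:
  assumes "stacked_polytope d V E F"
  shows "E \<subseteq> Pow V"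
  using assms
proof (induction rule: stacked_polytope.induct)
  case (stack V E F f v)
  with stacked_polytope_facet[OF stack.hyps(1,2)] show ?case by auto
qed auto

lemma stress_free_attach_vertex:
  fixes P :: "'v \<Rightarrow> real^'n"
  assumes sf: "stress_free V E P" and fin: "finite V" and edges: "E \<subseteq> Pow V" and v: "v \<notin> V" and f: "f \<subseteq> V"
    and indep: "\<And>mu u. (\<Sum>u\<in>f. mu u *\<^sub>R (P u - P v)) = 0 \<Longrightarrow> u \<in> f \<Longrightarrow> mu u = 0"
  shows "stress_free (insert v V) (E \<union> {{v, u} | u. u \<in> f}) P"
  unfolding stress_free_def
proof (intro allI impI)
  let ?V = "insert v V" and ?E = "E \<union> {{v, u} | u. u \<in> f}"
  fix T :: "'v set \<Rightarrow> real"
  assume eq: "\<forall>i\<in>?V. (\<Sum>j\<in>{j\<in>?V. {i, j} \<in> ?E}. T {i, j} *\<^sub>R (P j - P i)) = 0"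
  have "{j\<in>?V. {v, j} \<in> ?E} = f"
    using edges v f by (auto simp: doubleton_eq_iff)
  with eq have "(\<Sum>u\<in>f. T {v, u} *\<^sub>R (P u - P v)) = 0" by auto
  hence T_new: "T {v, u} = 0" if "u \<in> f" for u
    using indep[of "\<lambda>u. T {v, u}"] that by simp
  have "(\<Sum>j\<in>{j\<in>V. {i, j} \<in> E}. T {i, j} *\<^sub>R (P j - P i)) = 0" if i: "i \<in> V" for i
  proof -
    have "(\<Sum>j\<in>{j\<in>?V. {i, j} \<in> ?E}. T {i, j} *\<^sub>R (P j - P i)) =
          (\<Sum>j\<in>{j\<in>V. {i, j} \<in> E}. T {i, j} *\<^sub>R (P j - P i))"
    proof (rule sum.mono_neutral_right)
      show "\<forall>j\<in>{j\<in>?V. {i, j} \<in> ?E} - {j\<in>V. {i, j} \<in> E}. T {i, j} *\<^sub>R (P j - P i) = 0"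
      proof
        fix j assume j: "j \<in> {j\<in>?V. {i, j} \<in> ?E} - {j\<in>V. {i, j} \<in> E}"
        then have "{i, j} \<notin> E" using edges by auto
        with j obtain u where "u \<in> f" "{i, j} = {v, u}" by auto
        with i v have "{i, j} = {v, i}" "i \<in> f" by (auto simp: doubleton_eq_iff)
        with T_new show "T {i, j} *\<^sub>R (P j - P i) = 0" by simp
      qed
    qed (use fin in auto)
    with eq i show ?thesis by simp
  qed
  with sf have "\<forall>e\<in>E. T e = 0" unfolding stress_free_def by blast
  with T_new show "\<forall>e\<in>?E. T e = 0" by blast
qed

lemma stacked_polytope_stress_free:
  fixes P :: "'v \<Rightarrow> real^'n"
  assumes "stacked_polytope d V E F" "d \<ge> 1" "polar_gram V E t P"
  shows "stress_free V E P"
  using assms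
proof (induction rule: stacked_polytope.induct)
  case (simplex S)
  let ?E = "{{a, b} | a b. a \<in> S \<and> b \<in> S \<and> a \<noteq> b}"
  have S: "S \<subseteq> S" "clique ?E S" "finite S" "card S \<noteq> 2"
    using simplex by (auto simp: clique_def)
  show ?case unfolding stress_free_def
  proof (intro allI impI ballI)
    fix T :: "'v set \<Rightarrow> real" and e
    assume eq: "\<forall>i\<in>S. (\<Sum>j\<in>{j\<in>S. {i, j} \<in> ?E}. T {i, j} *\<^sub>R (P j - P i)) = 0"
      and "e \<in> ?E"
    then obtain a b where ab: "a \<in> S" "b \<in> S" "a \<noteq> b" "e = {a, b}" by blast
    have "{j\<in>S. {a, j} \<in> ?E} = S - {a}"
      using ab(1) by (auto simp: doubleton_eq_iff)
    with eq ab(1) have "(\<Sum>j\<in>S - {a}. T {a, j} *\<^sub>R (P j - P a)) = 0" by auto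
    from polar_gram_clique_edge_vectors_independent[OF simplex.prems(2) S ab(1) this] ab
    show "T e = 0" by simp
  qed
next
  case (stack V E F f v)
  let ?V = "insert v V" and ?E = "E \<union> {{v, u} | u. u \<in> f}"
  have f: "f \<subseteq> V" "card f = d + 1" "clique E f"
    using stacked_polytope_facet[OF stack.hyps(1,2)] by auto
  have "polar_gram V E t P"
    using stack.prems(2) unfolding polar_gram_def by auto
  with stack.IH stack.prems(1) have "stress_free V E P" by blast
  moreover have "mu u = 0"
    if "(\<Sum>u\<in>f. mu u *\<^sub>R (P u - P v)) = 0" "u \<in> f" for mu u
  proof -
    have "v \<notin> f" "finite f" using f(1,2) stack.hyps(3) card.infinite by fastforce+
    then have W: "insert v f \<subseteq> ?V" "clique ?E (insert v f)" "finite (insert v f)"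
        "card (insert v f) \<noteq> 2"
      using f stack.prems(1) by (auto simp: clique_def insert_commute)
    from \<open>v \<notin> f\<close> that have "(\<Sum>u\<in>insert v f - {v}. mu u *\<^sub>R (P u - P v)) = 0" "u \<in> insert v f - {v}"
      by auto
    from polar_gram_clique_edge_vectors_independent[OF stack.prems(2) W insertI1 this]
    show ?thesis .
  qed
  ultimately show ?case
    by (rule stress_free_attach_vertex[OF _ stacked_polytope_finite[OF stack.hyps(1)]
          stacked_polytope_edges[OF stack.hyps(1)] stack.hyps(3) f(1)])
qed

theorem theorem5p5:
  fixes V :: "'v set" and E :: "'v set set"
    and c :: "'v \<Rightarrow> real^'n" and th :: "'v \<Rightarrow> real" and d :: nat
  assumes "d \<ge> 2"
    and "CARD('n) = d + 1"
    and "stacked_polytope_graph d V E"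
    and "cap_packing V c th"
    and "tangency_graph_is V c th E"
  shows "stress_free V E (\<lambda>i. polar_vertex (c i) (th i))"
proof -
  obtain F where F: "stacked_polytope d V E F"
    using assms(3) unfolding stacked_polytope_graph_def by blast
  show ?thesis
    by (rule stacked_polytope_stress_free[OF F _ cap_packing_polar_gram[OF assms(4,5)]])
      (use assms(1) in simp)
qed

end
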